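(* Let $\Gamma$ be a symmetric multiset of even cardinality $N$, take $\tilde\Gamma=\Gamma$ (so $M=N$) and $p=0$, and let $k\ge 0$. Then the exponential pseudo-spline symbol $$a^{(k)}_{N,N,\Gamma}(z)=B^{(k)}_{N,\Gamma}(z)\,c^{(k)}_{N,\Gamma}(z)$$ is interpolatory, i.e. $$a^{(k)}_{N,N,\Gamma}(z)+a^{(k)}_{N,N,\Gamma}(-z)=2\quad\text{for all } z\neq0.$$
   Context: $\mathbb{R}^+$ denotes the positive reals, and $\lceil L\rceil:=\min\{m\in\mathbb{Z}:m\ge L\}$. Symmetric multiset: a multiset $\Gamma=\{\gamma_1,\dots,\gamma_N\}$ of complex numbers is symmetric if there exist distinct $\theta_1,\dots,\theta_q\in\mathbb{R}^+\cup\mathrm{i}[0,\pi)$ and positive integers $t_1,\dots,t_q$ such that: - $\Gamma$ consists of $\theta_j$ and $-\theta_j$, each with multiplicity $t_j$; - when $N$ is odd, $\Gamma$ contains one additional element $0$. Non-normalized symbol: $\tilde B^{(k)}_{L,\Lambda}(z):=z^{-\lceil L/2\rceil}\prod_{i=1}^L(e^{\lambda_i/2^{k+1}}z+1)$. Normalized symbol for $N$ even: fix one $\theta_j$ and set $B^{(k)}_{N,\Gamma}:=K^{(k)}\tilde B^{(k)}_{N,\Gamma}$ with $(K^{(k)})^{-1}=(e^{-\theta_j/2^{k+1}}+e^{\theta_j/2^{k+1}})\,\tilde B^{(k)}_{N-2,\Gamma'}(e^{\theta_j/2^{k+1}})$, where $\Gamma'$ is $\Gamma$ minus one copy each of $\pm\theta_j$.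 Let $\vartheta_1,\dots,\vartheta_n$ be the distinct values of $\Gamma$ with multiplicities $\tau_\ell$, and set $z_\ell=e^{-\vartheta_\ell/2^{k+1}}$. Then $c^{(k)}_{N,\Gamma}$ is the unique odd-symmetric Laurent polynomial ($c(z)=c(z^{-1})$) with coefficients supported in $[-N/2+1,N/2-1]$ satisfying $$c^{(s)}(z_\ell)=\sum_{i=0}^s\binom{s}{i}v_{\ell,i}\,G^{(s-i)}(z_\ell)\qquad(s=0,\dots,\tau_\ell-1),$$ where $G=1/B^{(k)}_{N,\Gamma}$ and $v_{\ell,i}=2\delta_{i,0}$ (the case $p=0$). *)

theory Defs
  imports "HOL-Analysis.Analysis" "HOL-Library.Multiset"
begin

definition theta_dom :: "complex set" where
  "theta_dom = complex_of_real ` {0<..} \<union> (\<lambda>y. \<i> * complex_of_real y) ` {0..<pi}"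

definition symmetric_mset :: "complex multiset \<Rightarrow> bool" where
  "symmetric_mset \<Gamma> \<longleftrightarrow>
     (\<exists>q::nat. \<exists>\<theta>::nat \<Rightarrow> complex. \<exists>t::nat \<Rightarrow> nat.
        inj_on \<theta> {..<q} \<and> (\<forall>j<q. \<theta> j \<in> theta_dom) \<and> (\<forall>j<q. 0 < t j) \<and>
        \<Gamma> = (\<Sum>j<q. replicate_mset (t j) (\<theta> j) + replicate_mset (t j) (- \<theta> j))
            + (if odd (size \<Gamma>) then {#0#} else {#}))"

definition Btilde :: "nat \<Rightarrow> complex multiset \<Rightarrow> complex \<Rightarrow> complex" where
  "Btilde k \<Lambda> z = z powi (- \<lceil>real (size \<Lambda>) / 2\<rceil>) *
     (\<Prod>l\<in>#\<Lambda>. exp (l / 2 ^ (k + 1)) * z + 1)"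

text \<open>Normalized symbol for N even, using the fixed theta_j = th.\<close>
definition Bnorm :: "nat \<Rightarrow> complex multiset \<Rightarrow> complex \<Rightarrow> complex \<Rightarrow> complex" where
  "Bnorm k \<Gamma> th z = Btilde k \<Gamma> z /
     ((exp (- th / 2 ^ (k + 1)) + exp (th / 2 ^ (k + 1))) *
      Btilde k (\<Gamma> - {#th, - th#}) (exp (th / 2 ^ (k + 1))))"

definition laurent_eval :: "nat \<Rightarrow> (int \<Rightarrow> complex) \<Rightarrow> complex \<Rightarrow> complex" where
  "laurent_eval N cf z = (\<Sum>j\<in>{- (int N div 2) + 1 .. int N div 2 - 1}. cf j * z powi j)"

text \<open>The defining conditions of c^(k)_{N,Gamma} (case p = 0, v_{l,i} = 2 delta_{i,0}).\<close>
definition c_conds :: "nat \<Rightarrow> complex multiset \<Rightarrow> complex \<Rightarrow> (int \<Rightarrow> complex) \<Rightarrow> bool" where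
  "c_conds k \<Gamma> th cf \<longleftrightarrow>
     (let N = size \<Gamma>; G = (\<lambda>z. 1 / Bnorm k \<Gamma> th z) in
       (\<forall>j. j \<notin> {- (int N div 2) + 1 .. int N div 2 - 1} \<longrightarrow> cf j = 0) \<and>
       (\<forall>z. z \<noteq> 0 \<longrightarrow> laurent_eval N cf z = laurent_eval N cf (inverse z)) \<and>
       (\<forall>v\<in>set_mset \<Gamma>. \<forall>s<count \<Gamma> v.
          let zl = exp (- v / 2 ^ (k + 1)) in
          (deriv ^^ s) (laurent_eval N cf) zl =
            (\<Sum>i=0..s. of_nat (s choose i) * (if i = 0 then 2 else 0) * (deriv ^^ (s - i)) G zl)))"

definition c_coeffs :: "nat \<Rightarrow> complex multiset \<Rightarrow> complex \<Rightarrow> int \<Rightarrow> complex" where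
  "c_coeffs k \<Gamma> th = (THE cf. c_conds k \<Gamma> th cf)"

definition c_sym :: "nat \<Rightarrow> complex multiset \<Rightarrow> complex \<Rightarrow> complex \<Rightarrow> complex" where
  "c_sym k \<Gamma> th z = laurent_eval (size \<Gamma>) (c_coeffs k \<Gamma> th) z"

definition a_sym :: "nat \<Rightarrow> complex multiset \<Rightarrow> complex \<Rightarrow> complex \<Rightarrow> complex" where
  "a_sym k \<Gamma> th z = Bnorm k \<Gamma> th z * c_sym k \<Gamma> th z"

end

theory Submission
  imports Defs "HOL-Complex_Analysis.Complex_Analysis" "HOL-Computational_Algebra.Computational_Algebra"
    "HOL-Computational_Algebra.Field_as_Ring"
begin

text \<open>
  Put N = 2m + 2 and e_l = exp (l / 2^(k+1)) for l in Gamma. Up to the factors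
  z^(m+1), z^m and a nonzero constant D, the symbol B^(k)_{N,Gamma} is the polynomial
  P(z) = prod_{l in Gamma} (1 + e_l z), and z^m c^(k)_{N,Gamma}(z) is a polynomial r of
  degree at most 2m (called c_poly below). The interpolation identity a(z) + a(-z) = 2 then becomes
      P(z) r(z) - P(-z) r(-z) = 2 D z^(2m+1).                                      (odd)
  Since Gamma is symmetric and lies in the strip |Im| < pi, the polynomials P(z) and P(-z) are
  coprime; hence (odd) has a unique solution r of degree below deg P, its degree is at most 2m,
  and r is palindromic because P is. Read differently, (odd) says that r(z)/z^m - 2/B(z) vanishes
  to order count(Gamma, v) at the zero z_v = exp (-v / 2^(k+1)) of P(-z): this is precisely the
  Hermite interpolation problem defining c, and a degree count shows it has no other solution.
  So c = r/z^m, and (odd) yields the theorem.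
\<close>

section \<open>The substitution z \<mapsto> -z on polynomials\<close>

definition neg_arg :: "'a::comm_ring_1 poly \<Rightarrow> 'a poly" where
  "neg_arg p = pcompose p [:0, -1:]"

lemma coeff_neg_arg: "coeff (neg_arg p) i = (-1) ^ i * coeff p i"
  unfolding neg_arg_def by (rule coeff_pcompose_linear)

lemma poly_neg_arg [simp]: "poly (neg_arg p) z = poly p (- z)"
  unfolding neg_arg_def by (simp add: poly_pcompose)

lemma neg_arg_neg_arg [simp]: "neg_arg (neg_arg p) = p"
  by (rule poly_eqI) (simp add: coeff_neg_arg power_mult_distrib [symmetric])

lemma neg_arg_mult: "neg_arg (p * q) = neg_arg p * neg_arg q"
  unfolding neg_arg_def by (rule pcompose_mult)

lemma neg_arg_add: "neg_arg (p + q) = neg_arg p + neg_arg q"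
  unfolding neg_arg_def by (rule pcompose_add)

lemma neg_arg_diff: "neg_arg (p - q) = neg_arg p - neg_arg q"
  unfolding neg_arg_def by (rule pcompose_diff)

lemma neg_arg_smult: "neg_arg (smult c p) = smult c (neg_arg p)"
  unfolding neg_arg_def by (rule pcompose_smult)

lemma degree_neg_arg [simp]: "degree (neg_arg p) = degree (p :: 'a::idom poly)"
  unfolding neg_arg_def by (simp add: degree_pcompose)

lemma neg_arg_monom_odd: "odd n \<Longrightarrow> neg_arg (monom c n) = - monom c n"
  by (rule poly_eqI) (auto simp: coeff_neg_arg coeff_monom)

lemma neg_arg_linear: "neg_arg [:1, c:] = [:1, - c:]"
  by (rule poly_eqI) (simp add: coeff_neg_arg coeff_pCons split: nat.split)

lemma neg_arg_prod_mset: "neg_arg (\<Prod>x\<in>#M. f x) = (\<Prod>x\<in>#M. neg_arg (f x))"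
proof (induction M)
  case empty
  have "neg_arg 1 = 1" by (rule poly_eqI) (simp add: coeff_neg_arg coeff_1)
  then show ?case by simp
next
  case (add x M)
  then show ?case by (simp add: neg_arg_mult)
qed


section \<open>Coprime products of linear factors\<close>

lemma coprime_linear_factors:
  fixes a b :: "'a::field_gcd"
  assumes "a \<noteq> b"
  shows "coprime [:1, a:] [:1, b:]"
proof (rule coprimeI)
  fix c assume "c dvd [:1, a:]" "c dvd [:1, b:]"
  then have "c dvd smult b [:1, a:] - smult a [:1, b:]"
    by (intro dvd_diff dvd_smult)
  also have "smult b [:1, a:] - smult a [:1, b:] = [:b - a:]" by simp
  finally have "c dvd [:b - a:]" .
  moreover have "is_unit [:b - a:]" using assms by (simp add: is_unit_poly_iff dvd_field_iff)
  ultimately show "is_unit c" by (rule dvd_unit_imp_unit)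
qed

lemma coprime_prod_mset:
  fixes f g :: "'b \<Rightarrow> 'a::field_gcd poly"
  assumes "\<And>x y. x \<in># A \<Longrightarrow> y \<in># B \<Longrightarrow> coprime (f x) (g y)"
  shows "coprime (\<Prod>x\<in>#A. f x) (\<Prod>y\<in>#B. g y)"
proof -
  have "coprime (f x) (\<Prod>y\<in>#B. g y)" if "x \<in># A" for x
    using assms that by (induction B) auto
  then show ?thesis by (induction A) auto
qed
section \<open>The odd-part equation P(z) r(z) - P(-z) r(-z) = C z^(2m+1)\<close>

lemma bezout_degree_bounded:
  fixes P Q X :: "'a::field_gcd poly"
  assumes "coprime P Q" "0 < degree P" "0 < degree Q" "degree X < degree P + degree Q"
  shows "\<exists>a b. a * P + b * Q = X \<and> degree a < degree Q \<and> degree b < degree P"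
proof -
  have Q: "Q \<noteq> 0" using assms(3) by auto
  have "gcd P Q = 1" using assms(1) by (simp add: coprime_iff_gcd_eq_1)
  then obtain u v where uv: "u * P + v * Q = 1"
    using bezout_coefficients_fst_snd [of P Q] by metis
  define a where "a = u * X - (u * X div Q) * Q"
  define b where "b = v * X + (u * X div Q) * P"
  have comb: "a * P + b * Q = X"
  proof -
    have "a * P + b * Q = X * (u * P + v * Q)"
      unfolding a_def b_def by (simp add: algebra_simps)
    then show ?thesis using uv by simp
  qed
  have "a = u * X mod Q" unfolding a_def by (simp add: minus_div_mult_eq_mod)
  have da: "degree a < degree Q"
    using degree_mod_less [OF Q, of "u * X"] assms(3) \<open>a = u * X mod Q\<close> by auto
  have "degree b < degree P"
  proof (cases "b = 0")
    case False
    have "degree (a * P) < degree P + degree Q"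
      using degree_mult_le [of a P] da by simp
    moreover have "b * Q = X - a * P" using comb by (simp add: algebra_simps)
    ultimately have "degree (b * Q) < degree P + degree Q"
      using assms(4) degree_diff_le_max [of X "a * P"] by simp
    then show ?thesis using degree_mult_eq [OF False Q] by simp
  qed (use assms(2) in simp)
  then show ?thesis using comb da by blast
qed

text \<open>A Bezout solution is symmetrised under z \<mapsto> -z, and the
  leading coefficient of degree 4m + 3 rules out degree 2m + 1.\<close>
lemma odd_equation_solvable:
  fixes P :: "'a::{field_char_0, field_gcd} poly"
  assumes cop: "coprime P (neg_arg P)" and dP: "degree P = 2 * m + 2"
  shows "\<exists>r. degree r \<le> 2 * m \<and> P * r - neg_arg P * neg_arg r = monom C (2 * m + 1)"
proof -
  define X where "X = monom C (2 * m + 1)"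
  have negX: "neg_arg X = - X" unfolding X_def by (rule neg_arg_monom_odd) simp
  have "degree X < degree P + degree (neg_arg P)"
    using degree_monom_le [of C "2 * m + 1"] dP unfolding X_def by simp
  then have "\<exists>a b. a * P + b * neg_arg P = X \<and> degree a < degree P \<and> degree b < degree P"
    using bezout_degree_bounded [OF cop] dP by simp
  then obtain a b where ab: "a * P + b * neg_arg P = X"
    and da: "degree a < degree P" and db: "degree b < degree P"
    by blast
  have neg: "neg_arg a * neg_arg P + neg_arg b * P = - X"
    using arg_cong [OF ab, of neg_arg] negX by (simp add: neg_arg_add neg_arg_mult)
  define r where "r = smult (1/2) (a - neg_arg b)"
  have "P * (a - neg_arg b) - neg_arg P * neg_arg (a - neg_arg b)
      = (a * P + b * neg_arg P) - (neg_arg a * neg_arg P + neg_arg b * P)"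
    by (simp add: neg_arg_diff algebra_simps)
  also have "\<dots> = X + X" using ab neg by simp
  finally have eq2: "P * (a - neg_arg b) - neg_arg P * neg_arg (a - neg_arg b) = X + X" .
  have eq: "P * r - neg_arg P * neg_arg r = X"
    unfolding r_def neg_arg_smult mult_smult_right smult_diff_right [symmetric] eq2
    by (simp only: smult_add_right smult_add_left [symmetric]) simp
  have dr: "degree r \<le> 2 * m + 1"
    using degree_diff_le_max [of a "neg_arg b"] da db dP unfolding r_def by simp
  have "degree r \<le> 2 * m"
  proof (rule ccontr)
    assume "\<not> degree r \<le> 2 * m"
    then have d: "degree r = 2 * m + 1" using dr by simp
    then have "r \<noteq> 0" by auto
    have idx: "degree P + degree r = 4 * m + 3" "degree (neg_arg P) + degree (neg_arg r) = 4 * m + 3"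
      using d dP by simp_all
    have "coeff (P * r) (4 * m + 3) = lead_coeff P * lead_coeff r"
      using coeff_mult_degree_sum [of P r] unfolding idx .
    moreover have "coeff (neg_arg P * neg_arg r) (4 * m + 3) = - (lead_coeff P * lead_coeff r)"
      using coeff_mult_degree_sum [of "neg_arg P" "neg_arg r"] d dP
      unfolding idx by (simp add: coeff_neg_arg)
    moreover have "coeff X (4 * m + 3) = 0" unfolding X_def by (simp add: coeff_monom)
    ultimately have "2 * (lead_coeff P * lead_coeff r) = 0"
      using arg_cong [OF eq, of "\<lambda>p. coeff p (4 * m + 3)"] by simp
    moreover have "P \<noteq> 0" using dP by auto
    ultimately show False using \<open>r \<noteq> 0\<close> by simp
  qed
  then show ?thesis using eq unfolding X_def by blast
qed

lemma odd_equation_unique: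
  fixes P :: "'a::field_gcd poly"
  assumes cop: "coprime P (neg_arg P)"
    and "degree r1 < degree P" "degree r2 < degree P"
    and "P * r1 - neg_arg P * neg_arg r1 = P * r2 - neg_arg P * neg_arg r2"
  shows "r1 = r2"
proof (rule ccontr)
  define d where "d = r1 - r2"
  assume "r1 \<noteq> r2"
  then have "d \<noteq> 0" by (simp add: d_def)
  have "d * P = neg_arg P * neg_arg d"
    using assms(4) unfolding d_def neg_arg_diff by (simp add: algebra_simps)
  then have "neg_arg P dvd d * P" by (metis dvd_triv_left)
  then have "neg_arg P dvd d"
    using cop coprime_commute coprime_dvd_mult_left_iff by blast
  from dvd_imp_degree_le [OF this \<open>d \<noteq> 0\<close>] have "degree P \<le> degree d" by simp
  moreover have "degree d < degree P"
    using assms(2,3) degree_diff_le_max [of r1 r2] unfolding d_def by simp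
  ultimately show False by simp
qed

definition reflect_within :: "nat \<Rightarrow> 'a::comm_semiring_1 poly \<Rightarrow> 'a poly" where
  "reflect_within n r = (\<Sum>i\<le>n. monom (coeff r (n - i)) i)"

lemma coeff_reflect_within: "coeff (reflect_within n r) j = (if j \<le> n then coeff r (n - j) else 0)"
  unfolding reflect_within_def by (simp add: coeff_sum coeff_monom)

lemma degree_reflect_within: "degree (reflect_within n r) \<le> n"
  by (rule degree_le) (simp add: coeff_reflect_within)

lemma poly_sum_upto:
  fixes p :: "'a::comm_semiring_1 poly"
  assumes "degree p \<le> n"
  shows "poly p x = (\<Sum>i\<le>n. coeff p i * x ^ i)"
proof -
  have "poly p x = poly (\<Sum>i\<le>n. monom (coeff p i) i) x"
    by (simp only: poly_as_sum_of_monoms' [OF assms])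
  then show ?thesis by (simp add: poly_sum poly_monom)
qed

lemma poly_reflect_within:
  fixes r :: "'a::field poly"
  assumes "degree r \<le> n" "z \<noteq> 0"
  shows "poly (reflect_within n r) z = z ^ n * poly r (inverse z)"
proof -
  have "poly (reflect_within n r) z = (\<Sum>i\<le>n. coeff r (n - i) * z ^ i)"
    unfolding reflect_within_def by (simp add: poly_sum poly_monom)
  also have "\<dots> = (\<Sum>i\<le>n. coeff r i * z ^ (n - i))"
    by (rule sum.reindex_bij_witness [where i = "\<lambda>i. n - i" and j = "\<lambda>i. n - i"]) auto
  also have "\<dots> = (\<Sum>i\<le>n. z ^ n * (coeff r i * inverse z ^ i))"
    by (rule sum.cong) (use assms(2) in \<open>auto simp: power_diff_conv_inverse\<close>)
  also have "\<dots> = z ^ n * poly r (inverse z)"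
    by (simp add: poly_sum_upto [OF assms(1)] sum_distrib_left)
  finally show ?thesis .
qed

lemma poly_eq_if_eq_off_zero:
  fixes p q :: "'a::{idom, ring_char_0} poly"
  assumes "\<And>z. z \<noteq> 0 \<Longrightarrow> poly p z = poly q z"
  shows "p = q"
proof (rule ccontr)
  assume "p \<noteq> q"
  then have "finite {z. poly (p - q) z = 0}" by (intro poly_roots_finite) simp
  moreover have "UNIV - {0} \<subseteq> {z. poly (p - q) z = 0}" using assms by auto
  ultimately have "finite (UNIV - {0::'a})" by (rule finite_subset [rotated])
  then show False by (simp add: infinite_UNIV_char_0)
qed

text \<open>If P is palindromic of degree 2m + 2, then so is the solution of the odd-part
  equation, because its reflection solves the same equation.\<close>
lemma odd_equation_palindromic:
  fixes P r :: "'a::{field_char_0, field_gcd} poly"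
  assumes cop: "coprime P (neg_arg P)" and dP: "degree P = 2 * m + 2"
    and palin: "\<And>z. z \<noteq> 0 \<Longrightarrow> poly P z = z ^ (2 * m + 2) * poly P (inverse z)"
    and dr: "degree r \<le> 2 * m"
    and sol: "P * r - neg_arg P * neg_arg r = monom C (2 * m + 1)"
  shows "reflect_within (2 * m) r = r"
proof (rule odd_equation_unique [OF cop])
  show "degree (reflect_within (2 * m) r) < degree P"
    using degree_reflect_within [of "2 * m" r] dP by simp
  show "degree r < degree P" using dr dP by simp
  have sol_at: "poly P x * poly r x - poly P (- x) * poly r (- x) = C * x ^ (2 * m + 1)" for x
    using arg_cong [OF sol, of "\<lambda>p. poly p x"] by (simp add: poly_monom)
  show "P * reflect_within (2 * m) r - neg_arg P * neg_arg (reflect_within (2 * m) r)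
      = P * r - neg_arg P * neg_arg r"
  proof (rule poly_eq_if_eq_off_zero)
    fix z :: 'a assume z: "z \<noteq> 0"
    define w where "w = inverse z"
    have "z * w = 1" using z by (simp add: w_def)
    have "poly (P * reflect_within (2 * m) r - neg_arg P * neg_arg (reflect_within (2 * m) r)) z
        = z ^ (2 * m + 2) * z ^ (2 * m) * (poly P w * poly r w - poly P (- w) * poly r (- w))"
      using palin [OF z] palin [of "- z"] poly_reflect_within [OF dr z]
        poly_reflect_within [OF dr, of "- z"] z
      by (simp add: w_def algebra_simps inverse_minus_eq)
    also have "\<dots> = C * z ^ (2 * m + 1) * (z * w) ^ (2 * m + 1)"
      unfolding sol_at by (simp add: power_mult_distrib power_add algebra_simps)
    also have "\<dots> = poly (P * r - neg_arg P * neg_arg r) z"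
      using \<open>z * w = 1\<close> sol_at [of z] by simp
    finally show "poly (P * reflect_within (2 * m) r - neg_arg P * neg_arg (reflect_within (2 * m) r)) z
        = poly (P * r - neg_arg P * neg_arg r) z" .
  qed
qed

section \<open>Laurent polynomials supported in [-m, m]\<close>

lemma laurent_support: "{- (int (2 * m + 2) div 2) + 1 .. int (2 * m + 2) div 2 - 1} = {- int m .. int m}"
  by simp

definition laurent_coeffs :: "nat \<Rightarrow> complex poly \<Rightarrow> int \<Rightarrow> complex" where
  "laurent_coeffs m r j = (if - int m \<le> j \<and> j \<le> int m then coeff r (nat (j + int m)) else 0)"

lemma laurent_eval_coeffs:
  assumes "degree r \<le> 2 * m" "z \<noteq> 0"
  shows "laurent_eval (2 * m + 2) (laurent_coeffs m r) z = poly r z / z ^ m"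
proof -
  have shift: "z powi j = z ^ nat (j + int m) / z ^ m" if "- int m \<le> j" for j
  proof -
    have "z powi j = z powi (int (nat (j + int m)) - int m)" using that by simp
    also have "\<dots> = z powi int (nat (j + int m)) / z powi int m"
      by (rule power_int_diff) (use assms(2) in simp)
    also have "\<dots> = z ^ nat (j + int m) / z ^ m"
      by (simp only: power_int_of_nat)
    finally show ?thesis .
  qed
  have "laurent_eval (2 * m + 2) (laurent_coeffs m r) z
      = (\<Sum>j\<in>{- int m..int m}. laurent_coeffs m r j * z powi j)"
    unfolding laurent_eval_def laurent_support ..
  also have "\<dots> = (\<Sum>i\<le>2 * m. coeff r i * z ^ i / z ^ m)"
    by (rule sum.reindex_bij_witness [where i = "\<lambda>i. int i - int m" and j = "\<lambda>j. nat (j + int m)"])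
      (auto simp: laurent_coeffs_def shift)
  also have "\<dots> = poly r z / z ^ m"
    by (simp add: poly_sum_upto [OF assms(1)] sum_divide_distrib)
  finally show ?thesis .
qed

lemma laurent_coeffs_surj:
  assumes "\<forall>j. j \<notin> {- int m .. int m} \<longrightarrow> cf j = 0"
  shows "\<exists>r. degree r \<le> 2 * m \<and> cf = laurent_coeffs m r"
proof -
  define r where "r = (\<Sum>i\<le>2 * m. monom (cf (int i - int m)) i)"
  have coeff_r: "coeff r i = (if i \<le> 2 * m then cf (int i - int m) else 0)" for i
    unfolding r_def by (simp add: coeff_sum coeff_monom)
  have "degree r \<le> 2 * m" by (rule degree_le) (simp add: coeff_r)
  moreover have "cf = laurent_coeffs m r"
    using assms by (auto simp: laurent_coeffs_def coeff_r fun_eq_iff)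
  ultimately show ?thesis by blast
qed

lemma laurent_eval_coeffs_inverse:
  fixes r :: "complex poly"
  assumes "degree r \<le> 2 * m" "reflect_within (2 * m) r = r" "z \<noteq> 0"
  shows "laurent_eval (2 * m + 2) (laurent_coeffs m r) z
       = laurent_eval (2 * m + 2) (laurent_coeffs m r) (inverse z)"
proof -
  have "poly r z = z ^ m * (z ^ m * poly r (inverse z))"
    using poly_reflect_within [OF assms(1,3)] assms(2) by (simp add: power_add [symmetric] mult_2)
  moreover have "laurent_eval (2 * m + 2) (laurent_coeffs m r) (inverse z) = z ^ m * poly r (inverse z)"
    using laurent_eval_coeffs [OF assms(1), of "inverse z"] assms(3)
    by (simp add: power_inverse divide_inverse)
  ultimately show ?thesis
    using laurent_eval_coeffs [OF assms(1,3)] assms(3) by simp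
qed

lemma higher_deriv_laurent_eval:
  fixes r :: "complex poly"
  assumes "degree r \<le> 2 * m" "z0 \<noteq> 0"
  shows "(deriv ^^ s) (laurent_eval (2 * m + 2) (laurent_coeffs m r)) z0
       = (deriv ^^ s) (\<lambda>z. poly r z / z ^ m) z0"
proof (rule higher_deriv_cong_ev [OF _ refl])
  have "eventually (\<lambda>z. z \<in> - {0}) (nhds z0)"
    using assms(2) by (intro eventually_nhds_in_open) auto
  then show "eventually (\<lambda>z. laurent_eval (2 * m + 2) (laurent_coeffs m r) z = poly r z / z ^ m) (nhds z0)"
    by eventually_elim (rule laurent_eval_coeffs [OF assms(1)], simp)
qed

section \<open>Higher derivatives and multiplicities of roots\<close>

lemma higher_deriv_poly: "(deriv ^^ s) (poly p) = poly ((pderiv ^^ s) (p :: complex poly))"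
proof (induction s)
  case (Suc s)
  have "deriv (poly ((pderiv ^^ s) p)) = poly (pderiv ((pderiv ^^ s) p))"
    by (intro ext DERIV_imp_deriv poly_DERIV)
  then show ?case using Suc by simp
qed simp

lemma order_ge_if_higher_derivs_vanish:
  fixes p :: "complex poly"
  assumes "p \<noteq> 0" "\<And>s. s < n \<Longrightarrow> (deriv ^^ s) (poly p) a = 0"
  shows "n \<le> order a p"
proof -
  have "n \<le> order a p" if "p \<noteq> 0" "\<forall>s<n. poly ((pderiv ^^ s) p) a = 0" for p
    using that
  proof (induction n arbitrary: p)
    case (Suc n)
    have root: "poly p a = 0" using Suc.prems(2) by (metis funpow_0 zero_less_Suc)
    have "pderiv p \<noteq> 0"
    proof
      assume "pderiv p = 0"
      then obtain c where "p = [:c:]" using pderiv_iszero by blast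
      then show False using root Suc.prems(1) by simp
    qed
    moreover have "\<forall>s<n. poly ((pderiv ^^ s) (pderiv p)) a = 0"
      using Suc.prems(2) by (auto simp: funpow_swap1 [symmetric])
    ultimately have "n \<le> order a (pderiv p)" by (rule Suc.IH)
    then show ?case using order_pderiv [OF Suc.prems(1) root] by simp
  qed simp
  then show ?thesis using assms by (simp add: higher_deriv_poly)
qed

lemma higher_deriv_zero_of_order:
  fixes g :: "complex \<Rightarrow> complex"
  assumes "open U" "z0 \<in> U" "g holomorphic_on U" "s < n"
  shows "(deriv ^^ s) (\<lambda>z. (z - z0) ^ n * g z) z0 = 0"
proof -
  have "(deriv ^^ s) (\<lambda>z. (z - z0) ^ n * g z) z0
      = (\<Sum>i = 0..s. of_nat (s choose i) * (deriv ^^ i) (\<lambda>z. (z - z0) ^ n) z0 * (deriv ^^ (s - i)) g z0)"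
    by (rule higher_deriv_mult) (use assms in \<open>auto intro!: holomorphic_intros\<close>)
  also have "\<dots> = 0"
    using assms(4) by (intro sum.neutral) (auto simp: higher_deriv_power)
  finally show ?thesis .
qed

lemma higher_deriv_eq_if_diff_zero_of_order:
  fixes f g h :: "complex \<Rightarrow> complex"
  assumes "open U" "z0 \<in> U" "f holomorphic_on U" "g holomorphic_on U" "h holomorphic_on U"
    and "\<And>z. z \<in> U \<Longrightarrow> f z - g z = (z - z0) ^ n * h z" and "s < n"
  shows "(deriv ^^ s) f z0 = (deriv ^^ s) g z0"
proof -
  have "(deriv ^^ s) f z0 - (deriv ^^ s) g z0 = (deriv ^^ s) (\<lambda>z. f z - g z) z0"
    by (rule higher_deriv_diff [symmetric]) (use assms in auto)
  also have "\<dots> = (deriv ^^ s) (\<lambda>z. (z - z0) ^ n * h z) z0"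
    by (rule higher_deriv_transform_within_open [where S = U])
      (use assms in \<open>auto intro!: holomorphic_intros\<close>)
  also have "\<dots> = 0" by (rule higher_deriv_zero_of_order) (use assms in auto)
  finally show ?thesis by simp
qed

lemma order_ge_if_higher_derivs_agree:
  fixes p q :: "complex poly"
  assumes "p \<noteq> q" "z0 \<noteq> 0"
    and agree: "\<And>s. s < n \<Longrightarrow> (deriv ^^ s) (\<lambda>z. poly p z / z ^ m) z0 = (deriv ^^ s) (\<lambda>z. poly q z / z ^ m) z0"
  shows "n \<le> order z0 (p - q)"
proof (rule order_ge_if_higher_derivs_vanish)
  show "p - q \<noteq> 0" using assms(1) by simp
  define U where "U = - {0 :: complex}"
  define h where "h z = poly (p - q) z / z ^ m" for z
  have U: "open U" "z0 \<in> U" using assms(2) by (auto simp: U_def)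
  have hol: "(\<lambda>z. poly p z / z ^ m) holomorphic_on U" "(\<lambda>z. poly q z / z ^ m) holomorphic_on U"
    "h holomorphic_on U"
    unfolding U_def h_def by (auto intro!: holomorphic_intros)
  have h_vanish: "(deriv ^^ t) h z0 = 0" if "t < n" for t
  proof -
    have "(deriv ^^ t) h z0 = (deriv ^^ t) (\<lambda>z. poly p z / z ^ m - poly q z / z ^ m) z0"
      unfolding h_def by (simp add: diff_divide_distrib)
    also have "\<dots> = 0"
      using higher_deriv_diff [OF hol(1,2) U] agree [OF that] by simp
    finally show ?thesis .
  qed
  fix s assume "s < n"
  have "poly (p - q) z = z ^ m * h z" if "z \<in> U" for z
    using that by (simp add: h_def U_def)
  then have "(deriv ^^ s) (poly (p - q)) z0 = (deriv ^^ s) (\<lambda>z. z ^ m * h z) z0"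
    by (intro higher_deriv_transform_within_open [OF _ _ U]) (auto intro!: holomorphic_intros hol(3))
  also have "\<dots> = (\<Sum>i = 0..s. of_nat (s choose i) * (deriv ^^ i) (\<lambda>z. z ^ m) z0 * (deriv ^^ (s - i)) h z0)"
    by (rule higher_deriv_mult) (use U hol(3) in \<open>auto intro: holomorphic_intros\<close>)
  also have "\<dots> = 0"
    using \<open>s < n\<close> by (intro sum.neutral) (auto simp: h_vanish)
  finally show "(deriv ^^ s) (poly (p - q)) z0 = 0" .
qed

lemma size_le_degree_if_roots:
  fixes d :: "'a::idom poly"
  assumes "d \<noteq> 0" "inj_on f (set_mset M)" "\<And>v. v \<in># M \<Longrightarrow> count M v \<le> order (f v) d"
  shows "size M \<le> degree d"
proof -
  have "image_mset f M \<subseteq># proots d"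
  proof (rule mset_subset_eqI)
    fix a
    show "count (image_mset f M) a \<le> count (proots d) a"
    proof (cases "\<exists>v\<in>#M. a = f v")
      case True
      then obtain v where v: "v \<in># M" "a = f v" by blast
      have "{x. x \<in># M \<and> a = f x} = {v}"
        using v assms(2) by (auto dest: inj_onD)
      then have "count (image_mset f M) a = count M v" by (simp add: count_image_mset')
      then show ?thesis using v assms(1,3) by simp
    next
      case False
      then have "count (image_mset f M) a = 0" by (auto simp: count_image_mset')
      then show ?thesis by simp
    qed
  qed
  then have "size (image_mset f M) \<le> size (proots d)" by (rule size_mset_mono)
  then show ?thesis using size_proots_le [of d] by simp
qed

lemma hermite_data_p0:
  "(\<Sum>i=0..s. of_nat (s choose i) * (if i = 0 then 2 else 0) * (deriv ^^ (s - i)) G z)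
     = 2 * (deriv ^^ s) G (z :: complex)"
proof -
  have "(\<Sum>i=0..s. of_nat (s choose i) * (if i = 0 then 2 else 0) * (deriv ^^ (s - i)) G z)
      = (\<Sum>i=0..s. if i = 0 then 2 * (deriv ^^ s) G z else 0)"
    by (rule sum.cong) auto
  then show ?thesis by (simp add: sum.delta)
qed

section \<open>Exponentials in a horizontal strip\<close>

lemma exp_eq_one_in_strip:
  fixes w :: complex
  assumes "\<bar>Im w\<bar> < 2 * pi" "exp w = 1"
  shows "w = 0"
proof -
  from assms(2) obtain n :: int where n: "Re w = 0" "Im w = of_int (2 * n) * pi"
    unfolding exp_eq_1 by blast
  with assms(1) have "\<bar>of_int (2 * n)\<bar> * pi < 2 * pi" by (simp add: abs_mult)
  then have "\<bar>of_int (2 * n)\<bar> < (2::real)" by simp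
  then have "n = 0" by linarith
  with n show ?thesis by (simp add: complex_eq_iff)
qed

lemma exp_ne_minus_one_in_strip:
  fixes w :: complex
  assumes "\<bar>Im w\<bar> < pi"
  shows "exp w \<noteq> -1"
proof
  assume "exp w = -1"
  then have "exp (2 * w) = 1" using exp_double [of w] by simp
  moreover have "\<bar>Im (2 * w)\<bar> < 2 * pi" using assms by simp
  ultimately have "w = 0" using exp_eq_one_in_strip by fastforce
  then show False using \<open>exp w = -1\<close> by simp
qed

lemma Im_divide_power_two: "\<bar>Im (a / 2 ^ (k + 1))\<bar> \<le> \<bar>Im a\<bar> / 2"
proof -
  have eq: "\<bar>Im (a / 2 ^ (k + 1))\<bar> = \<bar>Im a\<bar> / 2 ^ (k + 1)"
    using Im_divide_of_real [of a "2 ^ (k + 1)"] by (simp add: abs_divide)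
  have "(2::real) \<le> 2 ^ (k + 1)"
    using power_increasing [of 1 "k + 1" "2::real"] by simp
  then have "\<bar>Im a\<bar> / 2 ^ (k + 1) \<le> \<bar>Im a\<bar> / 2"
    by (intro divide_left_mono) auto
  then show ?thesis unfolding eq .
qed

section \<open>The setting: an even symmetric multiset in the strip\<close>

text \<open>Standing assumptions, all consequences of the hypotheses of the theorem: Gamma is invariant
  under negation, lies in the strip |Im| < pi, has 2m + 2 elements and contains th.\<close>
locale even_symmetric_multiset =
  fixes \<Gamma> :: "complex multiset" and k :: nat and th :: complex and m :: nat
  assumes symmetric: "image_mset uminus \<Gamma> = \<Gamma>"
    and in_strip: "\<And>l. l \<in># \<Gamma> \<Longrightarrow> \<bar>Im l\<bar> < pi"
    and size_eq: "size \<Gamma> = 2 * m + 2"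
    and th_in: "th \<in># \<Gamma>"
begin

definition e :: "complex \<Rightarrow> complex" where
  "e l = exp (l / 2 ^ (k + 1))"

lemma e_nonzero [simp]: "e l \<noteq> 0"
  by (simp add: e_def)

lemma e_add: "e (a + b) = e a * e b"
  by (simp add: e_def add_divide_distrib exp_add)

lemma e_minus: "e (- a) * e a = 1" "e a * e (- a) = 1"
  by (simp_all add: e_def exp_minus)

lemma minus_in: "l \<in># \<Gamma> \<Longrightarrow> - l \<in># \<Gamma>"
  by (metis image_eqI set_image_mset symmetric)

lemma image_mset_minus: "image_mset (\<lambda>l. f (- l)) \<Gamma> = image_mset f \<Gamma>"
proof -
  have "image_mset (\<lambda>l. f (- l)) \<Gamma> = image_mset f (image_mset uminus \<Gamma>)"
    by (simp add: multiset.map_comp comp_def)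
  then show ?thesis using symmetric by simp
qed

lemma prod_e: "(\<Prod>l\<in>#\<Gamma>. e l) = 1"
proof -
  have prod_sum: "(\<Prod>l\<in>#M. e l) = e (\<Sum>l\<in>#M. l)" for M
    by (induction M) (simp_all add: e_add, simp add: e_def)
  have neg_sum: "(\<Sum>l\<in>#M. - l) = - (\<Sum>l\<in>#M. l)" for M :: "complex multiset"
    by (induction M) simp_all
  have "(\<Sum>l\<in>#\<Gamma>. l) = (\<Sum>l\<in>#\<Gamma>. - l)"
    using image_mset_minus [of "\<lambda>l. l"] by simp
  then have "(\<Sum>l\<in>#\<Gamma>. l) = 0" unfolding neg_sum by simp
  then show ?thesis unfolding prod_sum by (simp add: e_def)
qed

lemma e_mult_ne_minus_one:
  assumes "a \<in># \<Gamma>" "b \<in># \<Gamma>"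
  shows "e a * e b \<noteq> -1"
proof -
  have "\<bar>Im (a + b)\<bar> < 2 * pi"
    using in_strip [OF assms(1)] in_strip [OF assms(2)] abs_triangle_ineq [of "Im a" "Im b"] by simp
  then have "\<bar>Im ((a + b) / 2 ^ (k + 1))\<bar> < pi"
    using Im_divide_power_two [of "a + b" k] by linarith
  moreover have "e a * e b = exp ((a + b) / 2 ^ (k + 1))" by (simp add: e_def add_divide_distrib exp_add)
  ultimately show ?thesis using exp_ne_minus_one_in_strip by simp
qed

lemma nodes_distinct: "inj_on (\<lambda>v. e (- v)) (set_mset \<Gamma>)"
proof (rule inj_onI)
  fix a b assume a: "a \<in># \<Gamma>" and b: "b \<in># \<Gamma>" and eq: "e (- a) = e (- b)"
  have "e (b - a) = e b * e (- a)" by (simp add: e_add [symmetric])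
  also have "\<dots> = 1" using eq e_minus(1) [of b] by (simp add: mult.commute)
  finally have "exp ((b - a) / 2 ^ (k + 1)) = 1" by (simp add: e_def)
  moreover have "\<bar>Im (b - a)\<bar> < 2 * pi"
    using in_strip [OF a] in_strip [OF b] abs_triangle_ineq4 [of "Im b" "Im a"] by simp
  then have "\<bar>Im ((b - a) / 2 ^ (k + 1))\<bar> < 2 * pi"
    using Im_divide_power_two [of "b - a" k] by linarith
  ultimately have "(b - a) / 2 ^ (k + 1) = 0" using exp_eq_one_in_strip by blast
  then show "a = b" by simp
qed

lemma node_eq: "exp (- v / 2 ^ (k + 1)) = e (- v)"
  by (simp add: e_def)

subsection \<open>The polynomial P and the symbol B\<close>

definition P :: "complex poly" where
  "P = (\<Prod>l\<in>#\<Gamma>. [:1, e l:])"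

lemma poly_P: "poly P z = (\<Prod>l\<in>#\<Gamma>. 1 + z * e l)"
  by (simp add: P_def poly_prod_mset)

lemma degree_P: "degree P = 2 * m + 2"
proof -
  have "degree (\<Prod>l\<in>#M. [:1, e l:]) = size M \<and> (\<Prod>l\<in>#M. [:1, e l:]) \<noteq> 0" for M
  proof (induction M)
    case (add x M)
    have "[:1, e x:] \<noteq> 0" "degree [:1, e x:] = 1" by simp_all
    then show ?case using add degree_mult_eq [of "[:1, e x:]" "\<Prod>l\<in>#M. [:1, e l:]"] by auto
  qed simp
  then show ?thesis using size_eq by (simp add: P_def)
qed

lemma P_nonzero: "P \<noteq> 0"
  using degree_P by auto

lemma coprime_P: "coprime P (neg_arg P)"
proof -
  have "neg_arg P = (\<Prod>l\<in>#\<Gamma>. [:1, - e l:])"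
    unfolding P_def neg_arg_prod_mset neg_arg_linear ..
  moreover have "e a \<noteq> - e b" if "a \<in># \<Gamma>" "b \<in># \<Gamma>" for a b
  proof
    assume "e a = - e b"
    then have "e a * e (- b) = -1" using e_minus(1) [of b] by (simp add: mult.commute)
    then show False using e_mult_ne_minus_one [OF that(1) minus_in [OF that(2)]] by simp
  qed
  ultimately show ?thesis
    unfolding P_def by (auto intro!: coprime_prod_mset coprime_linear_factors)
qed

text \<open>By the symmetry of Gamma and prod e_l = 1, P is palindromic.\<close>
lemma P_palindromic:
  assumes z: "z \<noteq> 0"
  shows "poly P z = z ^ (2 * m + 2) * poly P (inverse z)"
proof -
  have "z ^ (2 * m + 2) * poly P (inverse z) = (\<Prod>l\<in>#\<Gamma>. z * (1 + inverse z * e l))"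
    using size_eq by (simp add: poly_P prod_mset.distrib)
  also have "\<dots> = (\<Prod>l\<in>#\<Gamma>. z + e l)"
    using z by (simp add: distrib_left mult.assoc [symmetric])
  also have "\<dots> = (\<Prod>l\<in>#\<Gamma>. z + e (- l))"
    using image_mset_minus [of "\<lambda>l. z + e l"] by simp
  also have "\<dots> = (\<Prod>l\<in>#\<Gamma>. e (- l) * (1 + z * e l))"
    by (simp add: algebra_simps e_minus(2))
  also have "\<dots> = (\<Prod>l\<in>#\<Gamma>. e (- l)) * poly P z"
    by (simp add: poly_P prod_mset.distrib)
  also have "(\<Prod>l\<in>#\<Gamma>. e (- l)) = 1"
    using image_mset_minus [of e] prod_e by simp
  finally show ?thesis by simp
qed

lemma Btilde_eq: "Btilde k \<Gamma> z = poly P z / z ^ (m + 1)"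
proof -
  have "real (size \<Gamma>) / 2 = real (m + 1)" using size_eq by simp
  then have "\<lceil>real (size \<Gamma>) / 2\<rceil> = int (m + 1)" by (simp only: ceiling_of_nat)
  then have power: "z powi (- \<lceil>real (size \<Gamma>) / 2\<rceil>) = inverse (z ^ (m + 1))"
    by (simp only: power_int_minus power_int_of_nat)
  have product: "(\<Prod>l\<in>#\<Gamma>. exp (l / 2 ^ (k + 1)) * z + 1) = poly P z"
    unfolding poly_P e_def by (intro arg_cong [where f = prod_mset] image_mset_cong) simp
  show ?thesis
    unfolding Btilde_def power product by (rule divide_inverse_commute [symmetric])
qed

definition D :: complex where
  "D = (exp (- th / 2 ^ (k + 1)) + exp (th / 2 ^ (k + 1))) *
      Btilde k (\<Gamma> - {#th, - th#}) (exp (th / 2 ^ (k + 1)))"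

lemma D_nonzero: "D \<noteq> 0"
proof -
  have "exp (- th / 2 ^ (k + 1)) + exp (th / 2 ^ (k + 1)) \<noteq> 0"
    unfolding node_eq e_def [symmetric]
  proof
    assume "e (- th) + e th = 0"
    then have "(e (- th) + e th) * e th = 0" by simp
    then have "1 + e th * e th = 0" using e_minus(1) [of th] by (simp add: algebra_simps)
    then have "e th * e th = -1" by (simp add: add_eq_0_iff)
    then show False using e_mult_ne_minus_one [OF th_in th_in] by simp
  qed
  moreover have "exp (l / 2 ^ (k + 1)) * exp (th / 2 ^ (k + 1)) + 1 \<noteq> 0"
    if "l \<in># \<Gamma> - {#th, - th#}" for l
    using e_mult_ne_minus_one [OF in_diffD [OF that] th_in]
    unfolding e_def by (metis eq_neg_iff_add_eq_0)
  ultimately show ?thesis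
    unfolding D_def Btilde_def by (auto simp: prod_mset_zero_iff)
qed

lemma Bnorm_eq: "Bnorm k \<Gamma> th z = poly P z / (z ^ (m + 1) * D)"
  unfolding Bnorm_def Btilde_eq D_def [symmetric] by simp

lemma inverse_Bnorm: "(\<lambda>z. 1 / Bnorm k \<Gamma> th z) = (\<lambda>z. z ^ (m + 1) * D / poly P z)"
  by (simp add: Bnorm_eq)

lemma node_root_of_neg_arg_P:
  assumes "v \<in># \<Gamma>"
  shows "[:- e (- v), 1:] ^ count \<Gamma> v dvd neg_arg P"
proof -
  have "replicate_mset (count \<Gamma> v) v \<subseteq># \<Gamma>"
    by (simp flip: count_le_replicate_mset_subset_eq)
  then have "(\<Prod>l\<in>#replicate_mset (count \<Gamma> v) v. [:1, - e l:]) dvd (\<Prod>l\<in>#\<Gamma>. [:1, - e l:])"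
    by (intro prod_mset_subset_imp_dvd image_mset_subseteq_mono)
  then have "[:1, - e v:] ^ count \<Gamma> v dvd neg_arg P"
    unfolding P_def neg_arg_prod_mset neg_arg_linear by simp
  moreover have "[:1, - e v:] = [:- e (- v), 1:] * [:- e v:]"
    using e_minus(1) [of v] by (simp add: mult.commute)
  then have "[:- e (- v), 1:] ^ count \<Gamma> v dvd [:1, - e v:] ^ count \<Gamma> v"
    by (metis dvd_triv_left dvd_power_same)
  ultimately show ?thesis by (rule dvd_trans [rotated])
qed

lemma node_not_root_of_P:
  assumes "v \<in># \<Gamma>"
  shows "poly P (e (- v)) \<noteq> 0"
proof -
  have "1 + e (- v) * e l \<noteq> 0" if "l \<in># \<Gamma>" for l
    using e_mult_ne_minus_one [OF minus_in [OF assms] that] by (simp add: add_eq_0_iff)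
  then show ?thesis by (auto simp: poly_P)
qed

subsection \<open>The polynomial behind c\<close>

text \<open>The solution of the odd-part equation with right-hand side 2 D z^(2m+1); it will turn out
  to be z^m c(z).\<close>
definition c_poly :: "complex poly" where
  "c_poly = (SOME r. degree r \<le> 2 * m \<and> P * r - neg_arg P * neg_arg r = monom (2 * D) (2 * m + 1))"

lemma c_poly: "degree c_poly \<le> 2 * m" "P * c_poly - neg_arg P * neg_arg c_poly = monom (2 * D) (2 * m + 1)"
  using someI_ex [OF odd_equation_solvable [OF coprime_P degree_P]] unfolding c_poly_def by blast+

lemma poly_c_poly_equation:
  "poly P z * poly c_poly z - poly P (- z) * poly c_poly (- z) = 2 * D * z ^ (2 * m + 1)"
  using arg_cong [OF c_poly(2), of "\<lambda>p. poly p z"] by (simp add: poly_monom)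

lemma c_poly_palindromic: "reflect_within (2 * m) c_poly = c_poly"
  by (rule odd_equation_palindromic [OF coprime_P degree_P P_palindromic c_poly])

lemma c_conds_iff:
  "c_conds k \<Gamma> th cf \<longleftrightarrow>
     (\<forall>j. j \<notin> {- int m .. int m} \<longrightarrow> cf j = 0) \<and>
     (\<forall>z. z \<noteq> 0 \<longrightarrow> laurent_eval (2 * m + 2) cf z = laurent_eval (2 * m + 2) cf (inverse z)) \<and>
     (\<forall>v\<in>#\<Gamma>. \<forall>s<count \<Gamma> v. (deriv ^^ s) (laurent_eval (2 * m + 2) cf) (e (- v))
        = 2 * (deriv ^^ s) (\<lambda>z. z ^ (m + 1) * D / poly P z) (e (- v)))"
  unfolding c_conds_def Let_def size_eq laurent_support hermite_data_p0 inverse_Bnorm node_eq ..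

lemma c_poly_minus_inverse_B:
  assumes "z \<noteq> 0" "poly P z \<noteq> 0"
  shows "poly c_poly z / z ^ m - 2 * (z ^ (m + 1) * D / poly P z)
       = poly (neg_arg P) z * poly c_poly (- z) / (z ^ m * poly P z)"
proof -
  have "z ^ (2 * m + 1) = z ^ m * z ^ (m + 1)" by (simp add: mult_2 flip: power_add)
  then have "poly c_poly z / z ^ m - 2 * (z ^ (m + 1) * D / poly P z)
      = (poly P z * poly c_poly z - 2 * D * z ^ (2 * m + 1)) / (z ^ m * poly P z)"
    using assms by (simp add: field_simps)
  also have "\<dots> = poly (neg_arg P) z * poly c_poly (- z) / (z ^ m * poly P z)"
    using poly_c_poly_equation [of z] by (simp add: algebra_simps)
  finally show ?thesis .
qed

text \<open>Existence: the Laurent polynomial z^(-m) c_poly(z) solves the Hermite problem, since by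
  the odd-part equation its difference with 2/B is z^(-m) P(-z) c_poly(-z) / P(z), which
  vanishes to the required order at every node.\<close>
lemma c_poly_hermite:
  assumes v: "v \<in># \<Gamma>" and s: "s < count \<Gamma> v"
  shows "(deriv ^^ s) (laurent_eval (2 * m + 2) (laurent_coeffs m c_poly)) (e (- v))
       = 2 * (deriv ^^ s) (\<lambda>z. z ^ (m + 1) * D / poly P z) (e (- v))"
proof -
  define z0 where "z0 = e (- v)"
  define U where "U = - insert 0 {z. poly P z = 0}"
  define f where "f z = poly c_poly z / z ^ m" for z
  define G where "G z = z ^ (m + 1) * D / poly P z" for z
  obtain R where R: "neg_arg P = [:- z0, 1:] ^ count \<Gamma> v * R"
    using node_root_of_neg_arg_P [OF v] unfolding z0_def by (elim dvdE)
  define g where "g z = poly R z * poly c_poly (- z) / (z ^ m * poly P z)" for z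
  have U: "open U" "z0 \<in> U"
    using node_not_root_of_P [OF v] P_nonzero
    by (auto simp: U_def z0_def poly_roots_finite intro!: finite_imp_closed)
  have hol: "f holomorphic_on U" "G holomorphic_on U" "(\<lambda>z. 2 * G z) holomorphic_on U" "g holomorphic_on U"
    unfolding f_def G_def g_def U_def by (auto intro!: holomorphic_intros)
  have "f z - 2 * G z = (z - z0) ^ count \<Gamma> v * g z" if "z \<in> U" for z
    using c_poly_minus_inverse_B [of z] that unfolding f_def G_def g_def R
    by (simp add: U_def poly_power)
  then have "(deriv ^^ s) f z0 = (deriv ^^ s) (\<lambda>z. 2 * G z) z0"
    by (intro higher_deriv_eq_if_diff_zero_of_order [OF U hol(1,3,4) _ s])
  moreover have "(deriv ^^ s) (laurent_eval (2 * m + 2) (laurent_coeffs m c_poly)) z0 = (deriv ^^ s) f z0"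
    unfolding f_def by (rule higher_deriv_laurent_eval [OF c_poly(1)]) (simp add: z0_def)
  moreover have "(deriv ^^ s) (\<lambda>z. 2 * G z) z0 = 2 * (deriv ^^ s) G z0"
    by (rule higher_deriv_cmult [OF hol(2) U(2) U(1)])
  ultimately show ?thesis unfolding z0_def G_def by simp
qed

lemma c_poly_conds: "c_conds k \<Gamma> th (laurent_coeffs m c_poly)"
  unfolding c_conds_iff
proof (intro conjI allI impI ballI)
  fix j :: int assume "j \<notin> {- int m .. int m}"
  then show "laurent_coeffs m c_poly j = 0" by (auto simp: laurent_coeffs_def)
next
  fix z :: complex assume "z \<noteq> 0"
  then show "laurent_eval (2 * m + 2) (laurent_coeffs m c_poly) z
      = laurent_eval (2 * m + 2) (laurent_coeffs m c_poly) (inverse z)"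
    by (rule laurent_eval_coeffs_inverse [OF c_poly(1) c_poly_palindromic])
qed (rule c_poly_hermite)

text \<open>Uniqueness: two solutions differ by z^(-m) d(z) with deg d \<le> 2m, while d would need a
  root of multiplicity count Gamma v at each of the distinct nodes, 2m + 2 roots in all.\<close>
lemma c_conds_unique:
  assumes "c_conds k \<Gamma> th cf"
  shows "cf = laurent_coeffs m c_poly"
proof -
  have support: "\<forall>j. j \<notin> {- int m .. int m} \<longrightarrow> cf j = 0"
    and hermite: "\<And>v s. v \<in># \<Gamma> \<Longrightarrow> s < count \<Gamma> v \<Longrightarrow>
       (deriv ^^ s) (laurent_eval (2 * m + 2) cf) (e (- v))
         = 2 * (deriv ^^ s) (\<lambda>z. z ^ (m + 1) * D / poly P z) (e (- v))"
    using assms unfolding c_conds_iff by blast+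
  obtain p where p: "degree p \<le> 2 * m" "cf = laurent_coeffs m p"
    using laurent_coeffs_surj [OF support] by blast
  have "p = c_poly"
  proof (rule ccontr)
    assume ne: "p \<noteq> c_poly"
    have "count \<Gamma> v \<le> order (e (- v)) (p - c_poly)" if v: "v \<in># \<Gamma>" for v
    proof (rule order_ge_if_higher_derivs_agree [OF ne])
      show "e (- v) \<noteq> 0" by simp
      fix s assume s: "s < count \<Gamma> v"
      have "(deriv ^^ s) (\<lambda>z. poly p z / z ^ m) (e (- v))
          = (deriv ^^ s) (laurent_eval (2 * m + 2) cf) (e (- v))"
        unfolding p(2) by (rule higher_deriv_laurent_eval [OF p(1), symmetric]) simp
      also have "\<dots> = (deriv ^^ s) (laurent_eval (2 * m + 2) (laurent_coeffs m c_poly)) (e (- v))"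
        by (simp only: hermite [OF v s] c_poly_hermite [OF v s])
      also have "\<dots> = (deriv ^^ s) (\<lambda>z. poly c_poly z / z ^ m) (e (- v))"
        by (rule higher_deriv_laurent_eval [OF c_poly(1)]) simp
      finally show "(deriv ^^ s) (\<lambda>z. poly p z / z ^ m) (e (- v))
          = (deriv ^^ s) (\<lambda>z. poly c_poly z / z ^ m) (e (- v))" .
    qed
    then have "size \<Gamma> \<le> degree (p - c_poly)"
      using ne by (intro size_le_degree_if_roots [OF _ nodes_distinct]) auto
    moreover have "degree (p - c_poly) \<le> 2 * m"
      using p(1) c_poly(1) degree_diff_le_max [of p c_poly] by simp
    ultimately show False using size_eq by simp
  qed
  then show ?thesis using p(2) by simp
qed

lemma c_coeffs_eq: "c_coeffs k \<Gamma> th = laurent_coeffs m c_poly"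
  unfolding c_coeffs_def using c_poly_conds c_conds_unique by (rule the_equality)

subsection \<open>The interpolation property\<close>

lemma a_sym_eq:
  assumes "z \<noteq> 0"
  shows "a_sym k \<Gamma> th z = poly P z * poly c_poly z / (z ^ (2 * m + 1) * D)"
proof -
  have "a_sym k \<Gamma> th z = poly P z / (z ^ (m + 1) * D) * (poly c_poly z / z ^ m)"
    unfolding a_sym_def c_sym_def c_coeffs_eq Bnorm_eq size_eq
    using laurent_eval_coeffs [OF c_poly(1) assms] by simp
  also have "\<dots> = poly P z * poly c_poly z / (z ^ (m + 1) * z ^ m * D)"
    by (simp add: times_divide_times_eq ac_simps)
  also have "z ^ (m + 1) * z ^ m = z ^ (2 * m + 1)" by (simp add: mult_2 flip: power_add)
  finally show ?thesis .
qed

theorem interpolatory: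
  assumes "z \<noteq> 0"
  shows "a_sym k \<Gamma> th z + a_sym k \<Gamma> th (- z) = 2"
proof -
  define W where "W = z ^ (2 * m + 1)"
  have "W \<noteq> 0" using assms by (simp add: W_def)
  have "a_sym k \<Gamma> th z + a_sym k \<Gamma> th (- z)
      = (poly P z * poly c_poly z - poly P (- z) * poly c_poly (- z)) / (W * D)"
    using a_sym_eq [OF assms] a_sym_eq [of "- z"] assms
    by (simp add: W_def diff_divide_distrib)
  also have "\<dots> = 2"
    unfolding poly_c_poly_equation W_def [symmetric] using \<open>W \<noteq> 0\<close> D_nonzero by simp
  finally show ?thesis .
qed

end

text \<open>A symmetric multiset of even size is invariant under negation and lies in the strip
  |Im| < pi, because theta_dom lies in 0 \<le> Im < pi.\<close>
lemma symmetric_mset_even: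
  assumes "symmetric_mset \<Gamma>" "even (size \<Gamma>)"
  shows "image_mset uminus \<Gamma> = \<Gamma>" "\<And>l. l \<in># \<Gamma> \<Longrightarrow> \<bar>Im l\<bar> < pi"
proof -
  obtain q :: nat and \<theta> t where \<theta>: "\<forall>j<q. \<theta> j \<in> theta_dom"
    and \<Gamma>: "\<Gamma> = (\<Sum>j<q. replicate_mset (t j) (\<theta> j) + replicate_mset (t j) (- \<theta> j))"
    using assms unfolding symmetric_mset_def by auto
  show "image_mset uminus \<Gamma> = \<Gamma>"
    unfolding \<Gamma> by (induction q) (simp_all add: add_ac)
  fix l assume "l \<in># \<Gamma>"
  then have "\<exists>j<q. l = \<theta> j \<or> l = - \<theta> j"
    unfolding \<Gamma> by (induction q) (auto simp: less_Suc_eq split: if_splits)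
  moreover have "0 \<le> Im x \<and> Im x < pi" if "x \<in> theta_dom" for x
    using that unfolding theta_dom_def by auto
  ultimately show "\<bar>Im l\<bar> < pi" using \<theta> pi_gt_zero by force
qed

theorem mainTheorem9:
  fixes \<Gamma> :: "complex multiset" and k :: nat and th :: complex
  assumes "symmetric_mset \<Gamma>"
    and "even (size \<Gamma>)"
    and "th \<in># \<Gamma>" and "th \<in> theta_dom"
  shows "\<forall>z::complex. z \<noteq> 0 \<longrightarrow> a_sym k \<Gamma> th z + a_sym k \<Gamma> th (- z) = 2"
proof -
  obtain n where n: "size \<Gamma> = 2 * n" using assms(2) by (elim evenE)
  moreover have "size \<Gamma> \<noteq> 0" using assms(3) by auto
  ultimately have "size \<Gamma> = 2 * (n - 1) + 2" by simp
  then interpret even_symmetric_multiset \<Gamma> k th "n - 1"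
    using symmetric_mset_even [OF assms(1,2)] assms(3) by unfold_locales auto
  show ?thesis using interpolatory by blast
qed

end
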